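(* Suppose Assumption A and Assumption B (defined in the context) hold for the dynamic accuracy DFO algorithm described in the context, with criticality parameter $\epsilon\in(0,1]$, and suppose $\|\nabla f(\theta^k)\|\ge\epsilon$ for all $k=0,\ldots,k_\epsilon$. Then for every objective evaluation in iterations $k\le k_\epsilon$ it suffices to guarantee $\|\tilde x_i(\theta)-\hat x_i(\theta)\|=\mathcal{O}(\epsilon^2)$ for all $i=1,\ldots,n$; that is, there is a constant $C>0$ independent of $\epsilon$ such that if every evaluation point $\theta$ used in iterations $k\le k_\epsilon$ satisfies $\|\tilde x_i(\theta)-\hat x_i(\theta)\|\le C\epsilon^2$ for all $i$, then both accuracy requirements $\delta^k\le\eta_1'[m^k(0)-m^k(s^k)]$ and $\delta^k_+\le\eta_1'[m^k(0)-m^k(s^k)]$ hold, and the model-accuracy requirement $\|\tilde x_i(z^t)-\hat x_i(z^t)\|\le c(\Delta^k)^2$ (for a fixed $c>0$, used to guarantee full linearity) holds at the interpolation points.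
   Context: Setting. Let $n,d\ge 1$, data $x_1,\ldots,x_n$, and $\hat x_i(\theta)$ the (exact) lower-level minimizers, with $r_i(\theta)=\|\hat x_i(\theta)-x_i\|$, $r=(r_1,\ldots,r_n):\mathbb{R}^d\to\mathbb{R}^n$ and objective $f(\theta)=\frac1n\|r(\theta)\|^2$. For any $\theta$ one can compute an approximation $\tilde x_i(\theta)$ with $\|\tilde x_i(\theta)-\hat x_i(\theta)\|$ as small as desired; set $\tilde r_i(\theta)=\|\tilde x_i(\theta)-x_i\|$ and $\tilde f(\theta)=\frac1n\|\tilde r(\theta)\|^2$. We say $\tilde f(\theta)$ is evaluated with accuracy $\delta$ if $|\tilde f(\theta)-f(\theta)|\le\delta$. Models. At iteration $k$ the algorithm holds an iterate $\theta^k$, a radius $\Delta^k>0$, and interpolation points $z^0=\theta^k,z^1,\ldots,z^d\in\mathbb{R}^d$ with $z^1-\theta^k,\ldots,z^d-\theta^k$ linearly independent; $J^k\in\mathbb{R}^{n\times d}$ is the unique matrix with $\tilde r(\theta^k)+J^k(z^t-\theta^k)=\tilde r(z^t)$ for $t=1,\ldots,d$. Set $M^k(s)=\tilde r(\theta^k)+J^k s$ and $m^k(s)=\frac1n\|M^k(s)\|^2=\tilde f(\theta^k)+(g^k)^Ts+\frac12 s^TH^ks$ with $g^k=\frac2n (J^k)^T\tilde r(\theta^k)$, $H^k=\frac2n(J^k)^TJ^k$. Fixed constants $\kappa_{\rm ef},\kappa_{\rm eg}>0$ (independent of $k,\theta^k,\Delta^k$) are given, and $m^k$ is called fully linear in $B(\theta^k,\Delta^k)$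 if $|f(\theta^k+s)-m^k(s)|\le\kappa_{\rm ef}(\Delta^k)^2$ and $\|\nabla f(\theta^k+s)-\nabla m^k(s)\|\le\kappa_{\rm eg}\Delta^k$ for all $\|s\|\le\Delta^k$. Full linearity is guaranteed by using well-poised interpolation sets with evaluations satisfying $\|\tilde x_i(z^t)-\hat x_i(z^t)\|\le c(\Delta^k)^2$ for a fixed $c>0$. Algorithm. Parameters: $\Delta_{\max}>0$, $0<\gamma_{\rm dec}<1<\gamma_{\rm inc}$, $0<\eta_1\le\eta_2<1$, $0<\eta_1'<\min(\eta_1,1-\eta_2)/2$, $\epsilon>0$; inputs $\theta^0\in\mathbb{R}^d$, $0<\Delta^0\le\Delta_{\max}$. Build an initial model $m^0$ from an arbitrary interpolation set. For $k=0,1,2,\ldots$: (1) [accuracy phase] repeat: (a) except on the first pass, re-evaluate $\tilde f(\theta^k)$ with accuracy $\delta^k\le\eta_1'[m^k(0)-m^k(s^k)]$ using the $s^k$ from the previous pass; (b) [criticality phase] if $\|g^k\|\le\epsilon$, replace $\Delta^k$ by $\gamma_{\rm dec}^i\Delta^k$ for $i=0,1,2,\ldots$ (making the model fully linear in the current ball) until $m^k$ is fully linear in $B(\theta^k,\Delta^k)$ and $\Delta^k\le\|g^k\|$; (c) compute $s^k$ with $\|s^k\|\le\Delta^k$ approximately minimizing $m^k$ over that ball; until $\tilde f(\theta^k)$ has been evaluated with accuracy $\delta^k\le\eta_1'[m^k(0)-m^k(s^k)]$. (2) Evaluate $\tilde f(\theta^k+s^k)$ with accuracy $\delta^k_+\le\eta_1'[m^k(0)-m^k(s^k)]$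 and set $\tilde\rho^k=\frac{\tilde f(\theta^k)-\tilde f(\theta^k+s^k)}{m^k(0)-m^k(s^k)}$. (3) Set $\theta^{k+1}=\theta^k+s^k$ if $\tilde\rho^k\ge\eta_2$, or if $\tilde\rho^k\ge\eta_1$ and $m^k$ is fully linear in $B(\theta^k,\Delta^k)$; otherwise $\theta^{k+1}=\theta^k$. Set $\Delta^{k+1}=\min(\gamma_{\rm inc}\Delta^k,\Delta_{\max})$ if $\tilde\rho^k\ge\eta_2$; $\Delta^{k+1}=\Delta^k$ if $\tilde\rho^k<\eta_2$ and $m^k$ is not fully linear in $B(\theta^k,\Delta^k)$; $\Delta^{k+1}=\gamma_{\rm dec}\Delta^k$ otherwise. (4) If $\theta^{k+1}=\theta^k+s^k$, form $m^{k+1}$ by adding $\theta^{k+1}$ to the interpolation set (removing an existing point); otherwise set $m^{k+1}=m^k$ if $m^k$ is fully linear in $B(\theta^k,\Delta^k)$, else form $m^{k+1}$ by making $m^k$ fully linear in $B(\theta^{k+1},\Delta^{k+1})$. Assumption A: the set $\mathcal{B}=\{z: \|z-\theta\|\le\Delta_{\max}\text{ for some }\theta\text{ with }f(\theta)\le f(\theta^0)\}$ is bounded, and $r$ is continuously differentiable on $\mathcal{B}$ with $\partial r$ Lipschitz continuous with constant $L_J$ on $\mathcal{B}$. Assumption B: for all $k$, $m^k(0)-m^k(s^k)\ge\frac12\|g^k\|\min\left(\Delta^k,\frac{\|g^k\|}{\|H^k\|+1}\right)$, and there is $\kappa_H\ge1$ with $\|H^k\|+1\le\kappa_H$ for all $k$.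 *)

theory Defs
  imports "HOL-Analysis.Analysis"
begin

text \<open>Parameters theta live in a Euclidean space 'a (dimension d = DIM('a)); the lower-level
variables live in a Euclidean space 'b; the n data points are indexed by a finite type 'n
(n = CARD('n)).  xs i is the data point x_i and xhat i theta is the lower-level minimiser.\<close>

definition fval :: "real^'n \<Rightarrow> real" where
  "fval v = (norm v)^2 / real CARD('n)"

definition rres :: "('n::finite \<Rightarrow> 'b::real_normed_vector) \<Rightarrow> ('n \<Rightarrow> 'a \<Rightarrow> 'b) \<Rightarrow> 'a \<Rightarrow> real^'n" where
  "rres xs xhat theta = (\<chi> i. norm (xhat i theta - xs i))"

definition fobj :: "('n::finite \<Rightarrow> 'b::real_normed_vector) \<Rightarrow> ('n \<Rightarrow> 'a \<Rightarrow> 'b) \<Rightarrow> 'a \<Rightarrow> real" where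
  "fobj xs xhat theta = fval (rres xs xhat theta)"

text \<open>An evaluation at a point returns approximations xt i of xhat i (theta).\<close>

definition rtil :: "('n::finite \<Rightarrow> 'b::real_normed_vector) \<Rightarrow> ('n \<Rightarrow> 'b) \<Rightarrow> real^'n" where
  "rtil xs xt = (\<chi> i. norm (xt i - xs i))"

definition ftil :: "('n::finite \<Rightarrow> 'b::real_normed_vector) \<Rightarrow> ('n \<Rightarrow> 'b) \<Rightarrow> real" where
  "ftil xs xt = fval (rtil xs xt)"

text \<open>A model is a pair (xt, J): xt is the evaluation at the current iterate (giving
rtil(theta^k)) and J is the (linear) interpolation Jacobian.  M(s) = rtil + J s.\<close>

definition mval :: "('n::finite \<Rightarrow> 'b::real_normed_vector) \<Rightarrow> ('n \<Rightarrow> 'b) \<times> ('a \<Rightarrow> real^'n) \<Rightarrow> 'a \<Rightarrow> real" where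
  "mval xs M s = fval (rtil xs (fst M) + snd M s)"

definition mgrad :: "('n::finite \<Rightarrow> 'b::real_normed_vector) \<Rightarrow> ('n \<Rightarrow> 'b) \<times> ('a::real_inner \<Rightarrow> real^'n) \<Rightarrow> 'a" where
  "mgrad xs M = (2 / real CARD('n)) *\<^sub>R adjoint (snd M) (rtil xs (fst M))"

definition mhess :: "('n::finite \<Rightarrow> 'b) \<times> ('a::real_inner \<Rightarrow> real^'n) \<Rightarrow> 'a \<Rightarrow> 'a" where
  "mhess M = (\<lambda>s. (2 / real CARD('n)) *\<^sub>R adjoint (snd M) (snd M s))"

definition fully_linear ::
  "real \<Rightarrow> real \<Rightarrow> ('a::real_inner \<Rightarrow> real) \<Rightarrow> ('n::finite \<Rightarrow> 'b::real_normed_vector)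
    \<Rightarrow> ('n \<Rightarrow> 'b) \<times> ('a \<Rightarrow> real^'n) \<Rightarrow> 'a \<Rightarrow> real \<Rightarrow> bool" where
  "fully_linear kef keg F xs M theta D \<longleftrightarrow>
     (\<forall>s. norm s \<le> D \<longrightarrow>
        \<bar>F (theta + s) - mval xs M s\<bar> \<le> kef * D^2 \<and>
        (\<exists>G. (GDERIV F (theta + s) :> G) \<and> norm (G - (mgrad xs M + mhess M s)) \<le> keg * D))"

text \<open>Trace of iterations of the algorithm.
  th k      : iterate theta^k
  Din k     : radius at the start of iteration k (before the criticality phase)
  m0 k      : model at the start of iteration k (m^k as handed over by step 4, or m^0)
  crit k    : whether the criticality phase is entered (||g^k|| <= eps)
  ncrit k   : number i of the final shrink step in the criticality phase
  cm k j    : model made fully linear in B(theta^k, gdec^j Din k) in the criticality phase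
  cerr k j  : max error ||xtilde_i(z^t) - xhat_i(z^t)|| over the other interpolation points z^t
              evaluated when building cm k j
  st k      : step s^k
  xp k      : evaluation at theta^k + s^k (step 2)
  ferr k    : max interpolation-point error when the model m^(k+1) is made fully linear
              in step 4.\<close>

record ('a, 'b, 'n) dfo_run =
  th :: "nat \<Rightarrow> 'a"
  Din :: "nat \<Rightarrow> real"
  m0 :: "nat \<Rightarrow> ('n \<Rightarrow> 'b) \<times> ('a \<Rightarrow> real^'n::finite)"
  crit :: "nat \<Rightarrow> bool"
  ncrit :: "nat \<Rightarrow> nat"
  cm :: "nat \<Rightarrow> nat \<Rightarrow> ('n \<Rightarrow> 'b) \<times> ('a \<Rightarrow> real^'n)"
  cerr :: "nat \<Rightarrow> nat \<Rightarrow> real"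
  st :: "nat \<Rightarrow> 'a"
  xp :: "nat \<Rightarrow> 'n \<Rightarrow> 'b"
  ferr :: "nat \<Rightarrow> real"

definition finm :: "('a, 'b, 'n::finite, 'z) dfo_run_scheme \<Rightarrow> nat \<Rightarrow> ('n \<Rightarrow> 'b) \<times> ('a \<Rightarrow> real^'n)" where
  "finm R k = (if crit R k then cm R k (ncrit R k) else m0 R k)"

definition Dfin :: "real \<Rightarrow> ('a, 'b, 'n::finite, 'z) dfo_run_scheme \<Rightarrow> nat \<Rightarrow> real" where
  "Dfin gdec R k = (if crit R k then gdec ^ ncrit R k * Din R k else Din R k)"

definition pdec :: "('n::finite \<Rightarrow> 'b::real_normed_vector) \<Rightarrow> ('a::real_normed_vector, 'b, 'n, 'z) dfo_run_scheme \<Rightarrow> nat \<Rightarrow> real" where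
  "pdec xs R k = mval xs (finm R k) 0 - mval xs (finm R k) (st R k)"

definition rhot :: "('n::finite \<Rightarrow> 'b::real_normed_vector) \<Rightarrow> ('a::real_normed_vector, 'b, 'n, 'z) dfo_run_scheme \<Rightarrow> nat \<Rightarrow> real" where
  "rhot xs R k = (ftil xs (fst (finm R k)) - ftil xs (xp R k)) / pdec xs R k"

definition FLk where
  "FLk kef keg xs xhat gdec R k \<longleftrightarrow>
     fully_linear kef keg (fobj xs xhat) xs (finm R k) (th R k) (Dfin gdec R k)"

definition accepted where
  "accepted kef keg xs xhat gdec eta1 eta2 R k \<longleftrightarrow>
     eta2 \<le> rhot xs R k \<or> (eta1 \<le> rhot xs R k \<and> FLk kef keg xs xhat gdec R k)"

text \<open>Step 4 rebuilds the model (making it fully linear in B(theta^(k+1), Delta^(k+1)))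
  exactly when the step is rejected and m^k is not fully linear.\<close>

definition rebuilt where
  "rebuilt kef keg xs xhat gdec eta1 eta2 R k \<longleftrightarrow>
     \<not> accepted kef keg xs xhat gdec eta1 eta2 R k \<and> \<not> FLk kef keg xs xhat gdec R k"

text \<open>Validity of iterations 0..K of the algorithm (one pass of the accuracy phase each).\<close>

definition dfo_run ::
  "('n::finite \<Rightarrow> 'b::euclidean_space) \<Rightarrow> ('n \<Rightarrow> 'a::euclidean_space \<Rightarrow> 'b) \<Rightarrow> real \<Rightarrow> real \<Rightarrow> real
   \<Rightarrow> real \<Rightarrow> real \<Rightarrow> real \<Rightarrow> real \<Rightarrow> real \<Rightarrow> real \<Rightarrow> 'a \<Rightarrow> real \<Rightarrow> nat
   \<Rightarrow> ('a, 'b, 'n, 'z) dfo_run_scheme \<Rightarrow> bool" where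
  "dfo_run xs xhat kef keg c Dmax gdec ginc eta1 eta2 eps th0 D0 K R \<longleftrightarrow>
    th R 0 = th0 \<and> Din R 0 = D0 \<and>
    (\<forall>k \<le> Suc K. linear (snd (m0 R k))) \<and>
    (\<forall>k \<le> K.
      (crit R k \<longleftrightarrow> norm (mgrad xs (m0 R k)) \<le> eps) \<and>
      (crit R k \<longrightarrow>
         (\<forall>j \<le> ncrit R k. linear (snd (cm R k j)) \<and>
            ((\<forall>i. norm (fst (cm R k j) i - xhat i (th R k)) \<le> c * (gdec ^ j * Din R k)^2)
               \<and> cerr R k j \<le> c * (gdec ^ j * Din R k)^2
             \<longrightarrow> fully_linear kef keg (fobj xs xhat) xs (cm R k j) (th R k) (gdec ^ j * Din R k))) \<and>
         (\<forall>j < ncrit R k.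
            \<not> (fully_linear kef keg (fobj xs xhat) xs (cm R k j) (th R k) (gdec ^ j * Din R k)
                 \<and> gdec ^ j * Din R k \<le> norm (mgrad xs (cm R k j)))) \<and>
         fully_linear kef keg (fobj xs xhat) xs (cm R k (ncrit R k)) (th R k) (Dfin gdec R k) \<and>
         Dfin gdec R k \<le> norm (mgrad xs (cm R k (ncrit R k)))) \<and>
      norm (st R k) \<le> Dfin gdec R k \<and>
      th R (Suc k) = (if accepted kef keg xs xhat gdec eta1 eta2 R k then th R k + st R k else th R k) \<and>
      Din R (Suc k) =
        (if eta2 \<le> rhot xs R k then min (ginc * Dfin gdec R k) Dmax
         else if \<not> FLk kef keg xs xhat gdec R k then Dfin gdec R k
         else gdec * Dfin gdec R k) \<and>
      (if accepted kef keg xs xhat gdec eta1 eta2 R k then fst (m0 R (Suc k)) = xp R k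
       else if FLk kef keg xs xhat gdec R k then m0 R (Suc k) = finm R k
       else ((\<forall>i. norm (fst (m0 R (Suc k)) i - xhat i (th R (Suc k))) \<le> c * (Din R (Suc k))^2)
               \<and> ferr R k \<le> c * (Din R (Suc k))^2
             \<longrightarrow> fully_linear kef keg (fobj xs xhat) xs (m0 R (Suc k)) (th R (Suc k)) (Din R (Suc k)))))"

definition assumptionB where
  "assumptionB xs gdec kH K R \<longleftrightarrow>
    (\<forall>k \<le> K.
       pdec xs R k \<ge> 1/2 * norm (mgrad xs (finm R k)) *
          min (Dfin gdec R k) (norm (mgrad xs (finm R k)) / (onorm (mhess (finm R k)) + 1)) \<and>
       onorm (mhess (finm R k)) + 1 \<le> kH)"

definition assumptionA where
  "assumptionA xs xhat th0 Dmax \<longleftrightarrow>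
    (let B = {z. \<exists>theta. fobj xs xhat theta \<le> fobj xs xhat th0 \<and> dist z theta \<le> Dmax} in
      bounded B \<and>
      (\<exists>J LJ. (\<forall>theta \<in> B. (rres xs xhat has_derivative J theta) (at theta)) \<and>
              (\<forall>theta \<in> B. \<forall>theta' \<in> B. onorm (\<lambda>h. J theta h - J theta' h) \<le> LJ * dist theta theta')))"

definition evals_within where
  "evals_within xs xhat e K R \<longleftrightarrow>
    (\<forall>k \<le> Suc K. \<forall>i. norm (fst (m0 R k) i - xhat i (th R k)) \<le> e) \<and>
    (\<forall>k \<le> K.
       (crit R k \<longrightarrow> (\<forall>j \<le> ncrit R k.
          (\<forall>i. norm (fst (cm R k j) i - xhat i (th R k)) \<le> e) \<and> cerr R k j \<le> e)) \<and>
       (\<forall>i. norm (xp R k i - xhat i (th R k + st R k)) \<le> e) \<and>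
       ferr R k \<le> e)"

end

theory Submission
  imports Defs
begin

text \<open>While \<open>\<parallel>\<nabla>f(\<theta>\<^sup>k)\<parallel> \<ge> \<epsilon>\<close>, full linearity keeps the model gradient above
  \<open>\<epsilon>/(1 + \<kappa>\<^sub>e\<^sub>g)\<close>, and a fully linear model on a radius of order \<open>\<epsilon>\<close> yields a very
  successful step.  Hence every trust-region radius, including those tried in the criticality
  phase, stays above a floor \<open>\<Delta>\<^sub>m\<^sub>i\<^sub>n\<close> of order \<open>\<epsilon>\<close>, and by Assumption B the predicted
  decrease is of order \<open>\<epsilon> \<Delta>\<^sub>m\<^sub>i\<^sub>n \<sim> \<epsilon>\<^sup>2\<close>.  Assumption A bounds the residuals near the
  sublevel set of \<open>\<theta>\<^sup>0\<close>, so lower-level errors \<open>e \<le> 1\<close> perturb \<open>f\<close> by \<open>O(e)\<close>.  Thus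
  \<open>e = C \<epsilon>\<^sup>2\<close> meets both accuracy requirements, and \<open>C \<epsilon>\<^sup>2 \<le> c \<Delta>\<^sub>m\<^sub>i\<^sub>n\<^sup>2\<close> gives the
  model-accuracy requirement.  The radius floor and the monotonicity of \<open>f(\<theta>\<^sup>k)\<close>, which keeps
  the iterates in that sublevel set, are proved together by induction on \<open>k\<close>.\<close>

lemma GDERIV_unique:
  assumes "GDERIV f x :> G" and "GDERIV f x :> G'"
  shows "G = G'"
proof -
  have "(\<lambda>h. inner h G) = (\<lambda>h. inner h G')"
    using assms unfolding gderiv_def by (rule has_derivative_unique)
  then have "inner (G - G') G = inner (G - G') G'" by metis
  then have "inner (G - G') (G - G') = 0" by (simp add: inner_diff_right)
  then show ?thesis by simp
qed

lemma abs_norm_sq_diff_le: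
  fixes u v :: "'a::real_normed_vector"
  shows "\<bar>(norm u)\<^sup>2 - (norm v)\<^sup>2\<bar> \<le> norm (u - v) * (2 * norm v + norm (u - v))"
proof -
  have "(norm u)\<^sup>2 - (norm v)\<^sup>2 = (norm u - norm v) * (norm u + norm v)"
    by (simp add: power2_eq_square algebra_simps)
  then have "\<bar>(norm u)\<^sup>2 - (norm v)\<^sup>2\<bar> = \<bar>norm u - norm v\<bar> * (norm u + norm v)"
    by (simp add: abs_mult)
  also have "\<dots> \<le> norm (u - v) * (2 * norm v + norm (u - v))"
    using norm_triangle_ineq3[of u v] norm_triangle_ineq[of "u - v" v]
    by (intro mult_mono) auto
  finally show ?thesis .
qed

lemma onorm_bounded_if_lipschitz:
  fixes J :: "'a::real_normed_vector \<Rightarrow> 'b::real_normed_vector \<Rightarrow> 'c::real_normed_vector"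
  assumes "bounded B"
    and linear: "\<And>t. t \<in> B \<Longrightarrow> bounded_linear (J t)"
    and lipschitz: "\<And>t t'. t \<in> B \<Longrightarrow> t' \<in> B \<Longrightarrow> onorm (\<lambda>h. J t h - J t' h) \<le> L * dist t t'"
  obtains M where "0 \<le> M" and "\<And>t. t \<in> B \<Longrightarrow> onorm (J t) \<le> M"
proof (cases "B = {}")
  case False
  then obtain t0 where t0: "t0 \<in> B" by blast
  from \<open>bounded B\<close> obtain a where a: "\<And>x. x \<in> B \<Longrightarrow> norm x \<le> a" by (auto simp: bounded_iff)
  have "onorm (J t) \<le> onorm (J t0) + \<bar>L\<bar> * (2 * a)" if t: "t \<in> B" for t
  proof -
    have "onorm (J t) = onorm (\<lambda>h. J t0 h + (J t h - J t0 h))" by simp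
    also have "\<dots> \<le> onorm (J t0) + onorm (\<lambda>h. J t h - J t0 h)"
      using linear t t0 by (intro onorm_triangle bounded_linear_sub) auto
    also have "onorm (\<lambda>h. J t h - J t0 h) \<le> \<bar>L\<bar> * dist t t0"
      using lipschitz[OF t t0] abs_ge_self[of L] zero_le_dist[of t t0]
      by (meson mult_right_mono order_trans)
    also have "dist t t0 \<le> 2 * a"
      using a[OF t] a[OF t0] norm_triangle_ineq4[of t t0] by (simp add: dist_norm)
    finally show ?thesis by (simp add: mult_left_mono)
  qed
  moreover have "0 \<le> a" using a[OF t0] norm_ge_zero[of t0] by linarith
  then have "0 \<le> onorm (J t0) + \<bar>L\<bar> * (2 * a)"
    using onorm_pos_le[OF linear[OF t0]] by simp
  ultimately show ?thesis using that by blast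
qed (use that in auto)

lemma norm_rres_le_near_sublevel:
  fixes xs :: "'n::finite \<Rightarrow> 'b::euclidean_space"
    and xhat :: "'n \<Rightarrow> 'a::euclidean_space \<Rightarrow> 'b"
  assumes "assumptionA xs xhat th0 Dmax" and "0 \<le> Dmax"
  obtains Rb where "0 \<le> Rb"
    and "\<And>theta z. fobj xs xhat theta \<le> fobj xs xhat th0 \<Longrightarrow> dist z theta \<le> Dmax
           \<Longrightarrow> norm (rres xs xhat z) \<le> Rb"
proof -
  define B where "B = {z. \<exists>theta. fobj xs xhat theta \<le> fobj xs xhat th0 \<and> dist z theta \<le> Dmax}"
  from assms obtain J LJ where bounded: "bounded B"
    and deriv: "\<And>t. t \<in> B \<Longrightarrow> (rres xs xhat has_derivative J t) (at t)"
    and lipschitz: "\<And>t t'. t \<in> B \<Longrightarrow> t' \<in> B \<Longrightarrow> onorm (\<lambda>h. J t h - J t' h) \<le> LJ * dist t t'"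
    unfolding assumptionA_def Let_def B_def by blast
  have linear: "\<And>t. t \<in> B \<Longrightarrow> bounded_linear (J t)"
    using deriv has_derivative_bounded_linear by blast
  obtain MJ where "0 \<le> MJ" and MJ: "\<And>t. t \<in> B \<Longrightarrow> onorm (J t) \<le> MJ"
    using onorm_bounded_if_lipschitz[OF bounded linear lipschitz] by blast
  define Rb where "Rb = sqrt (real CARD('n) * fobj xs xhat th0) + MJ * Dmax"
  have "norm (rres xs xhat z) \<le> Rb"
    if sub: "fobj xs xhat theta \<le> fobj xs xhat th0" and z: "dist z theta \<le> Dmax" for theta z
  proof -
    have ball: "cball theta Dmax \<subseteq> B" unfolding B_def using sub by (auto simp: dist_commute)
    have "norm (rres xs xhat z - rres xs xhat theta) \<le> MJ * norm (z - theta)"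
    proof (rule differentiable_bound[of "cball theta Dmax"])
      show "(rres xs xhat has_derivative J t) (at t within cball theta Dmax)"
        if "t \<in> cball theta Dmax" for t
        using ball that by (blast intro: has_derivative_at_withinI deriv)
      show "onorm (J t) \<le> MJ" if "t \<in> cball theta Dmax" for t using ball that MJ by blast
    qed (use z \<open>0 \<le> Dmax\<close> in \<open>auto simp: dist_commute\<close>)
    also have "\<dots> \<le> MJ * Dmax" using z \<open>0 \<le> MJ\<close> by (simp add: dist_norm mult_left_mono)
    finally have "norm (rres xs xhat z) \<le> norm (rres xs xhat theta) + MJ * Dmax"
      using norm_triangle_ineq2[of "rres xs xhat z" "rres xs xhat theta"] by linarith
    moreover have "norm (rres xs xhat theta) = sqrt (real CARD('n) * fobj xs xhat theta)"
      by (simp add: fobj_def fval_def)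
    moreover have "\<dots> \<le> sqrt (real CARD('n) * fobj xs xhat th0)"
      using sub by (simp add: mult_left_mono)
    ultimately show ?thesis unfolding Rb_def by linarith
  qed
  moreover have "0 \<le> Rb"
    using \<open>0 \<le> MJ\<close> \<open>0 \<le> Dmax\<close> unfolding Rb_def by (simp add: fobj_def fval_def)
  ultimately show ?thesis using that by blast
qed


lemma norm_rtil_minus_rres_le:
  fixes xs :: "'n::finite \<Rightarrow> 'b::real_normed_vector"
  assumes "\<forall>i. norm (xt i - xhat i theta) \<le> e"
  shows "norm (rtil xs xt - rres xs xhat theta) \<le> real CARD('n) * e"
proof -
  have "\<bar>(rtil xs xt - rres xs xhat theta) $ i\<bar> \<le> e" for i
  proof -
    have "\<bar>(rtil xs xt - rres xs xhat theta) $ i\<bar> = \<bar>norm (xt i - xs i) - norm (xhat i theta - xs i)\<bar>"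
      by (simp add: rtil_def rres_def)
    also have "\<dots> \<le> norm (xt i - xhat i theta)"
      using norm_triangle_ineq3[of "xt i - xs i" "xhat i theta - xs i"] by simp
    finally show ?thesis using assms by (meson order_trans)
  qed
  then have "(\<Sum>i\<in>UNIV. \<bar>(rtil xs xt - rres xs xhat theta) $ i\<bar>) \<le> (\<Sum>i\<in>(UNIV::'n set). e)"
    by (intro sum_mono)
  then show ?thesis using norm_le_l1_cart[of "rtil xs xt - rres xs xhat theta"] by simp
qed

lemma ftil_minus_fobj_le:
  fixes xs :: "'n::finite \<Rightarrow> 'b::real_normed_vector"
  assumes "\<forall>i. norm (xt i - xhat i theta) \<le> e" and "0 \<le> e" and "e \<le> 1"
    and "norm (rres xs xhat theta) \<le> Rb"
  shows "\<bar>ftil xs xt - fobj xs xhat theta\<bar> \<le> (2 * Rb + real CARD('n)) * e"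
proof -
  define n where "n = real CARD('n)"
  define d where "d = norm (rtil xs xt - rres xs xhat theta)"
  have "1 \<le> n" unfolding n_def by (simp add: Suc_leI)
  have d: "d \<le> n * e" unfolding d_def n_def using assms(1) by (rule norm_rtil_minus_rres_le)
  have "n * e \<le> n" using \<open>1 \<le> n\<close> \<open>e \<le> 1\<close> by (simp add: mult_left_le)
  with d have "d \<le> n" by linarith
  have "\<bar>(norm (rtil xs xt))\<^sup>2 - (norm (rres xs xhat theta))\<^sup>2\<bar> \<le> d * (2 * Rb + d)"
    using abs_norm_sq_diff_le[of "rtil xs xt" "rres xs xhat theta"] assms(4)
    unfolding d_def by (smt (verit) mult_left_mono norm_ge_zero)
  also have "\<dots> \<le> (n * e) * (2 * Rb + n)"
  proof (rule mult_mono)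
    have "0 \<le> d" unfolding d_def by simp
    moreover have "0 \<le> Rb" using assms(4) norm_ge_zero order_trans by blast
    ultimately show "0 \<le> 2 * Rb + d" by simp
  qed (use d \<open>d \<le> n\<close> \<open>0 \<le> e\<close> \<open>1 \<le> n\<close> in auto)
  finally show ?thesis
    using \<open>1 \<le> n\<close> by (simp add: ftil_def fobj_def fval_def n_def flip: diff_divide_distrib)
      (simp add: divide_le_eq algebra_simps)
qed

lemma mval_zero: "linear (snd M) \<Longrightarrow> mval xs M 0 = ftil xs (fst M)"
  by (simp add: mval_def ftil_def linear_0)

lemma linear_mhess:
  fixes M :: "('n::finite \<Rightarrow> 'b) \<times> ('a::euclidean_space \<Rightarrow> real^'n)"
  assumes "linear (snd M)"
  shows "linear (mhess M)"
  unfolding mhess_def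
  using assms adjoint_linear[OF assms]
  by (intro linear_compose_scale_right linear_compose[unfolded o_def, of "snd M" "adjoint (snd M)"])

lemma onorm_mhess_nonneg:
  fixes M :: "('n::finite \<Rightarrow> 'b) \<times> ('a::euclidean_space \<Rightarrow> real^'n)"
  assumes "linear (snd M)"
  shows "0 \<le> onorm (mhess M)"
  using linear_mhess[OF assms] by (simp add: linear_conv_bounded_linear onorm_pos_le)

lemma norm_gradient_le_if_fully_linear:
  fixes M :: "('n::finite \<Rightarrow> 'b::real_normed_vector) \<times> ('a::euclidean_space \<Rightarrow> real^'n)"
  assumes "fully_linear kef keg F xs M theta D" and "0 \<le> D" and "linear (snd M)"
    and "GDERIV F theta :> G"
  shows "norm G \<le> norm (mgrad xs M) + keg * D"
proof -
  obtain G' where "GDERIV F (theta + 0) :> G'" and G': "norm (G' - (mgrad xs M + mhess M 0)) \<le> keg * D"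
    using assms(1,2) unfolding fully_linear_def by (metis norm_zero)
  then have "G' = G" using assms(4) GDERIV_unique by simp
  then have "norm (G - mgrad xs M) \<le> keg * D"
    using G' linear_0[OF linear_mhess[OF assms(3)]] by simp
  then show ?thesis using norm_triangle_ineq[of "mgrad xs M" "G - mgrad xs M"] by simp
qed

text \<open>\<open>grad_floor\<close> bounds the model gradient from below, on radii below \<open>shrink_floor\<close> a
  fully linear model gives a very successful step, and \<open>radius_floor\<close> is \<open>\<Delta>\<^sub>m\<^sub>i\<^sub>n\<close>.\<close>

definition grad_floor :: "real \<Rightarrow> real \<Rightarrow> real" where
  "grad_floor keg eps = eps / (1 + keg)"

definition shrink_floor :: "real \<Rightarrow> real \<Rightarrow> real \<Rightarrow> real \<Rightarrow> real \<Rightarrow> real" where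
  "shrink_floor kef keg kH eta2 eps =
     min (grad_floor keg eps / kH) ((1 - eta2) * grad_floor keg eps / (4 * kef))"

definition radius_floor :: "real \<Rightarrow> real \<Rightarrow> real \<Rightarrow> real \<Rightarrow> real \<Rightarrow> real \<Rightarrow> real \<Rightarrow> real" where
  "radius_floor D0 gdec kef keg kH eta2 eps = min D0 (gdec * shrink_floor kef keg kH eta2 eps)"

lemma grad_floor_scale: "grad_floor keg eps = eps * grad_floor keg 1"
  by (simp add: grad_floor_def)

lemma shrink_floor_scale:
  "0 \<le> eps \<Longrightarrow> shrink_floor kef keg kH eta2 eps = eps * shrink_floor kef keg kH eta2 1"
  unfolding shrink_floor_def grad_floor_scale[of keg eps]
  by (simp add: min_mult_distrib_left mult.assoc mult.left_commute[of eps])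

lemma radius_floor_ge_scale:
  assumes "0 \<le> eps" and "eps \<le> 1" and "0 \<le> D0"
  shows "eps * radius_floor D0 gdec kef keg kH eta2 1 \<le> radius_floor D0 gdec kef keg kH eta2 eps"
proof -
  have "eps * D0 \<le> D0" using assms by (simp add: mult_left_le_one_le)
  then show ?thesis
    using assms unfolding radius_floor_def shrink_floor_scale[OF \<open>0 \<le> eps\<close>]
    by (simp add: min_mult_distrib_left algebra_simps)
qed

lemma error_tolerance_quadratic:
  assumes "0 < D0" and "0 < gdec" and "0 < kef" and "0 < keg" and "0 < kH" and "eta2 < 1"
    and "0 < c" and "0 < eta1'" and "0 < A"
  obtains C where "0 < C"
    and "\<And>eps. 0 < eps \<Longrightarrow> eps \<le> 1 \<Longrightarrow>
           C * eps\<^sup>2 \<le> 1 \<and>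
           C * eps\<^sup>2 \<le> c * (radius_floor D0 gdec kef keg kH eta2 eps)\<^sup>2 \<and>
           A * (C * eps\<^sup>2) \<le> eta1' * (1/2 * grad_floor keg eps * radius_floor D0 gdec kef keg kH eta2 eps)"
proof -
  define a where "a = grad_floor keg 1"
  define l where "l = radius_floor D0 gdec kef keg kH eta2 1"
  define C where "C = min 1 (min (c * l\<^sup>2) (eta1' * a * l / (2 * A)))"
  have "0 < a" using assms unfolding a_def grad_floor_def by simp
  then have "0 < l" using assms unfolding l_def radius_floor_def shrink_floor_def a_def[symmetric] by simp
  then have "0 < C" unfolding C_def using \<open>0 < a\<close> assms by simp
  moreover have "C * eps\<^sup>2 \<le> 1 \<and>
      C * eps\<^sup>2 \<le> c * (radius_floor D0 gdec kef keg kH eta2 eps)\<^sup>2 \<and>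
      A * (C * eps\<^sup>2) \<le> eta1' * (1/2 * grad_floor keg eps * radius_floor D0 gdec kef keg kH eta2 eps)"
    if "0 < eps" "eps \<le> 1" for eps
  proof (intro conjI)
    define Lb where "Lb = radius_floor D0 gdec kef keg kH eta2 eps"
    have Lb: "eps * l \<le> Lb"
      unfolding l_def Lb_def using that assms by (intro radius_floor_ge_scale) auto
    have "0 < eps\<^sup>2" "eps\<^sup>2 \<le> 1" using that by (auto simp: power_le_one)
    then show "C * eps\<^sup>2 \<le> 1" using \<open>0 < C\<close> unfolding C_def by (simp add: mult_le_one)
    have "C * eps\<^sup>2 \<le> c * l\<^sup>2 * eps\<^sup>2" using \<open>0 < eps\<^sup>2\<close> unfolding C_def by simp
    also have "\<dots> = c * (eps * l)\<^sup>2" by (simp add: power_mult_distrib)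
    also have "\<dots> \<le> c * Lb\<^sup>2" using Lb \<open>0 < l\<close> that assms by (intro mult_left_mono power_mono) auto
    finally show "C * eps\<^sup>2 \<le> c * Lb\<^sup>2" unfolding Lb_def .
    have "A * (C * eps\<^sup>2) \<le> A * (eta1' * a * l / (2 * A) * eps\<^sup>2)"
      using \<open>0 < eps\<^sup>2\<close> assms unfolding C_def by (intro mult_left_mono mult_right_mono) auto
    also have "\<dots> = eta1' * (1/2 * (eps * a) * (eps * l))"
      using assms by (simp add: field_simps power2_eq_square)
    also have "\<dots> \<le> eta1' * (1/2 * grad_floor keg eps * Lb)"
      using Lb that \<open>0 < a\<close> assms unfolding a_def grad_floor_scale[of keg eps]
      by (intro mult_left_mono) auto
    finally show "A * (C * eps\<^sup>2) \<le> eta1' * (1/2 * grad_floor keg eps * Lb)" .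
  qed
  ultimately show ?thesis using that by blast
qed

locale dfo_eps_run =
  fixes xs :: "'n::finite \<Rightarrow> 'b::euclidean_space"
    and xhat :: "'n \<Rightarrow> 'a::euclidean_space \<Rightarrow> 'b"
    and th0 :: 'a
    and D0 Dmax gdec ginc eta1 eta2 eta1' kef keg c kH eps :: real
    and K :: nat
    and R :: "('a, 'b, 'n) dfo_run"
    and Rb e :: real
  assumes params: "0 < gdec" "gdec < 1" "1 < ginc" "eta1 \<le> eta2" "eta2 < 1"
      "0 < eta1'" "eta1' < min eta1 (1 - eta2) / 2" "0 < D0" "D0 \<le> Dmax"
      "0 < kef" "0 < keg" "0 < c" "1 \<le> kH"
    and eps_pos: "0 < eps"
    and run: "dfo_run xs xhat kef keg c Dmax gdec ginc eta1 eta2 eps th0 D0 K R"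
    and model_decrease: "assumptionB xs gdec kH K R"
    and gradient_ge_eps: "\<forall>k \<le> K. \<exists>G. (GDERIV (fobj xs xhat) (th R k) :> G) \<and> eps \<le> norm G"
    and evals: "evals_within xs xhat e K R"
    and residual_bound: "\<And>theta z. fobj xs xhat theta \<le> fobj xs xhat th0 \<Longrightarrow> dist z theta \<le> Dmax
                           \<Longrightarrow> norm (rres xs xhat z) \<le> Rb"
    and e_nonneg: "0 \<le> e"
    and e_le_one: "e \<le> 1"
    and e_le_model_tol: "e \<le> c * (radius_floor D0 gdec kef keg kH eta2 eps)\<^sup>2"
    and e_le_decrease_tol: "(2 * Rb + real CARD('n)) * e
          \<le> eta1' * (1/2 * grad_floor keg eps * radius_floor D0 gdec kef keg kH eta2 eps)"
begin

abbreviation "f \<equiv> fobj xs xhat"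
abbreviation "FL M theta D \<equiv> fully_linear kef keg f xs M theta D"
abbreviation "gmin \<equiv> grad_floor keg eps"
abbreviation "tau \<equiv> shrink_floor kef keg kH eta2 eps"
abbreviation "Dmin \<equiv> radius_floor D0 gdec kef keg kH eta2 eps"

lemma gmin_pos: "0 < gmin"
  using eps_pos params by (simp add: grad_floor_def)

lemma gmin_le_eps: "gmin \<le> eps"
  using eps_pos params by (simp add: grad_floor_def divide_le_eq)

lemma tau_pos: "0 < tau"
  using gmin_pos params by (simp add: shrink_floor_def)

lemma tau_le: "tau \<le> gmin / kH" "tau \<le> (1 - eta2) * gmin / (4 * kef)"
  by (simp_all add: shrink_floor_def)

lemma tau_le_gmin: "tau \<le> gmin"
proof -
  have "gmin / kH \<le> gmin" using gmin_pos params by (simp add: divide_le_eq)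
  then show ?thesis using tau_le(1) by linarith
qed

lemma Dmin_pos: "0 < Dmin"
  using tau_pos params by (simp add: radius_floor_def)

lemma Dmin_le: "Dmin \<le> D0" "Dmin \<le> gdec * tau"
  by (simp_all add: radius_floor_def)

lemma Dmin_le_gmin_div_kH: "Dmin \<le> gmin / kH"
proof -
  have "gdec * tau \<le> tau" using tau_pos params by simp
  then show ?thesis using Dmin_le(2) tau_le(1) by linarith
qed

lemma e_le_model_tol_if:
  assumes "Dmin \<le> D"
  shows "e \<le> c * D\<^sup>2"
proof -
  have "Dmin\<^sup>2 \<le> D\<^sup>2" using assms Dmin_pos by (intro power_mono) auto
  then show ?thesis using e_le_model_tol params by (smt (verit) mult_left_mono)
qed

lemma th_0: "th R 0 = th0" and Din_0: "Din R 0 = D0"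
  using run unfolding dfo_run_def by auto

lemma
  assumes "k \<le> K"
  shows crit_iff: "crit R k \<longleftrightarrow> norm (mgrad xs (m0 R k)) \<le> eps"
    and norm_st_le: "norm (st R k) \<le> Dfin gdec R k"
    and th_Suc: "th R (Suc k) =
          (if accepted kef keg xs xhat gdec eta1 eta2 R k then th R k + st R k else th R k)"
    and Din_Suc: "Din R (Suc k) =
          (if eta2 \<le> rhot xs R k then min (ginc * Dfin gdec R k) Dmax
           else if \<not> FLk kef keg xs xhat gdec R k then Dfin gdec R k
           else gdec * Dfin gdec R k)"
  using run assms unfolding dfo_run_def by blast+

lemma crit_phase:
  assumes "k \<le> K" and "crit R k"
  shows "\<forall>j \<le> ncrit R k. linear (snd (cm R k j)) \<and>
            ((\<forall>i. norm (fst (cm R k j) i - xhat i (th R k)) \<le> c * (gdec ^ j * Din R k)\<^sup>2)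
               \<and> cerr R k j \<le> c * (gdec ^ j * Din R k)\<^sup>2
             \<longrightarrow> FL (cm R k j) (th R k) (gdec ^ j * Din R k))"
    and "\<forall>j < ncrit R k. \<not> (FL (cm R k j) (th R k) (gdec ^ j * Din R k)
                 \<and> gdec ^ j * Din R k \<le> norm (mgrad xs (cm R k j)))"
    and "FL (cm R k (ncrit R k)) (th R k) (Dfin gdec R k)"
    and "Dfin gdec R k \<le> norm (mgrad xs (cm R k (ncrit R k)))"
  using run assms unfolding dfo_run_def by blast+

lemma
  assumes "k \<le> K" and "crit R k"
  shows crit_model_linear: "j \<le> ncrit R k \<Longrightarrow> linear (snd (cm R k j))"
    and crit_model_fully_linear: "j \<le> ncrit R k \<Longrightarrow>
          \<forall>i. norm (fst (cm R k j) i - xhat i (th R k)) \<le> c * (gdec ^ j * Din R k)\<^sup>2 \<Longrightarrow>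
          cerr R k j \<le> c * (gdec ^ j * Din R k)\<^sup>2 \<Longrightarrow>
          FL (cm R k j) (th R k) (gdec ^ j * Din R k)"
    and crit_continues: "j < ncrit R k \<Longrightarrow> FL (cm R k j) (th R k) (gdec ^ j * Din R k) \<Longrightarrow>
          norm (mgrad xs (cm R k j)) < gdec ^ j * Din R k"
  using crit_phase[OF assms] by (meson not_le)+

lemma linear_finm: "k \<le> K \<Longrightarrow> linear (snd (finm R k))"
  using run crit_model_linear[of k "ncrit R k"] unfolding dfo_run_def finm_def by auto

lemma finm_eval_err: "k \<le> K \<Longrightarrow> \<forall>i. norm (fst (finm R k) i - xhat i (th R k)) \<le> e"
  using evals unfolding evals_within_def finm_def by auto

lemma crit_evals_within:
  "k \<le> K \<Longrightarrow> crit R k \<Longrightarrow> j \<le> ncrit R k \<Longrightarrow>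
     (\<forall>i. norm (fst (cm R k j) i - xhat i (th R k)) \<le> e) \<and> cerr R k j \<le> e"
  using evals unfolding evals_within_def by auto

text \<open>If a radius of the criticality phase were at most \<open>gmin\<close>, the model built on it
  would be fully linear, and \<open>\<parallel>\<nabla>f\<parallel> \<ge> \<epsilon>\<close> would force the stopping test to hold.\<close>

lemma crit_radius_gt_gmin:
  assumes k: "k \<le> K" and cr: "crit R k" and j: "j < ncrit R k"
    and Dj: "Dmin \<le> gdec ^ j * Din R k"
  shows "gmin < gdec ^ j * Din R k"
proof (rule ccontr)
  define D where "D = gdec ^ j * Din R k"
  assume "\<not> gmin < gdec ^ j * Din R k"
  then have "D \<le> gmin" unfolding D_def by simp
  have "0 \<le> D" using Dj Dmin_pos unfolding D_def by simp
  have "e \<le> c * D\<^sup>2" using e_le_model_tol_if Dj unfolding D_def by simp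
  then have FL: "FL (cm R k j) (th R k) D"
    using crit_evals_within[OF k cr] crit_model_fully_linear[OF k cr] j unfolding D_def
    by (meson less_imp_le order_trans)
  obtain G where G: "GDERIV f (th R k) :> G" "eps \<le> norm G" using gradient_ge_eps k by blast
  have "eps \<le> norm (mgrad xs (cm R k j)) + keg * D"
    using norm_gradient_le_if_fully_linear[OF FL \<open>0 \<le> D\<close> crit_model_linear[OF k cr] G(1)] G(2) j
    by simp
  moreover have "D * (1 + keg) \<le> eps"
    using \<open>D \<le> gmin\<close> params by (simp add: grad_floor_def le_divide_eq)
  ultimately have "D \<le> norm (mgrad xs (cm R k j))" by (simp add: algebra_simps)
  then show False using crit_continues[OF k cr j] FL unfolding D_def by simp
qed

lemma crit_radius_ge_Dmin:
  assumes k: "k \<le> K" and cr: "crit R k" and D: "Dmin \<le> Din R k"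
  shows "j \<le> ncrit R k \<Longrightarrow> Dmin \<le> gdec ^ j * Din R k"
proof (induction j)
  case 0
  then show ?case using D by simp
next
  case (Suc j)
  then have "gmin < gdec ^ j * Din R k" using crit_radius_gt_gmin[OF k cr] by simp
  then have "gdec * tau \<le> gdec * (gdec ^ j * Din R k)" using tau_le_gmin params by simp
  then show ?case using Dmin_le(2) by simp
qed

lemma Dfin_ge_Dmin: "k \<le> K \<Longrightarrow> Dmin \<le> Din R k \<Longrightarrow> Dmin \<le> Dfin gdec R k"
  using crit_radius_ge_Dmin[of k "ncrit R k"] unfolding Dfin_def by auto

lemma Dfin_le_Din: "0 \<le> Din R k \<Longrightarrow> Dfin gdec R k \<le> Din R k"
  using params by (simp add: Dfin_def mult_left_le_one_le power_le_one)

lemma model_grad_ge_gmin: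
  assumes k: "k \<le> K" and D: "Dmin \<le> Din R k"
  shows "gmin \<le> norm (mgrad xs (finm R k))"
proof (cases "crit R k")
  case True
  obtain G where G: "GDERIV f (th R k) :> G" "eps \<le> norm G" using gradient_ge_eps k by blast
  have "0 \<le> Dfin gdec R k" using Dfin_ge_Dmin[OF k D] Dmin_pos by simp
  then have "eps \<le> norm (mgrad xs (cm R k (ncrit R k))) + keg * Dfin gdec R k"
    using norm_gradient_le_if_fully_linear[OF crit_phase(3)[OF k True] _ _ G(1)]
      crit_model_linear[OF k True] G(2) by fastforce
  also have "\<dots> \<le> norm (mgrad xs (cm R k (ncrit R k))) * (1 + keg)"
    using crit_phase(4)[OF k True] params by (simp add: algebra_simps)
  finally show ?thesis
    using True params by (simp add: grad_floor_def finm_def divide_le_eq)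
next
  case False
  then show ?thesis using crit_iff[OF k] gmin_le_eps by (simp add: finm_def)
qed

lemma pdec_ge:
  assumes k: "k \<le> K" and D: "Dmin \<le> Din R k"
  shows "1/2 * gmin * min (Dfin gdec R k) (gmin / kH) \<le> pdec xs R k"
proof -
  define g where "g = norm (mgrad xs (finm R k))"
  define h where "h = onorm (mhess (finm R k))"
  have B: "1/2 * g * min (Dfin gdec R k) (g / (h + 1)) \<le> pdec xs R k" "h + 1 \<le> kH"
    using model_decrease k unfolding assumptionB_def g_def h_def by auto
  have "0 \<le> h" unfolding h_def by (rule onorm_mhess_nonneg[OF linear_finm[OF k]])
  have "gmin \<le> g" unfolding g_def by (rule model_grad_ge_gmin[OF k D])
  have "gmin / kH \<le> g / (h + 1)"
    using \<open>0 \<le> h\<close> \<open>gmin \<le> g\<close> B(2) gmin_pos by (intro frac_le) auto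
  moreover have "0 \<le> min (Dfin gdec R k) (gmin / kH)"
    using Dfin_ge_Dmin[OF k D] Dmin_pos gmin_pos params by simp
  ultimately have "1/2 * gmin * min (Dfin gdec R k) (gmin / kH)
      \<le> 1/2 * g * min (Dfin gdec R k) (g / (h + 1))"
    using \<open>gmin \<le> g\<close> gmin_pos by (intro mult_mono) auto
  then show ?thesis using B(1) by linarith
qed

lemma pdec_ge_Dmin:
  assumes "k \<le> K" and "Dmin \<le> Din R k"
  shows "1/2 * gmin * Dmin \<le> pdec xs R k"
proof -
  have "Dmin \<le> min (Dfin gdec R k) (gmin / kH)"
    using Dfin_ge_Dmin[OF assms] Dmin_le_gmin_div_kH by simp
  then have "1/2 * gmin * Dmin \<le> 1/2 * gmin * min (Dfin gdec R k) (gmin / kH)"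
    using gmin_pos by simp
  then show ?thesis using pdec_ge[OF assms] by linarith
qed

lemma eval_err_le_pdec:
  assumes "k \<le> K" and "Dmin \<le> Din R k"
  shows "(2 * Rb + real CARD('n)) * e \<le> eta1' * pdec xs R k"
  using e_le_decrease_tol mult_left_mono[OF pdec_ge_Dmin[OF assms], of eta1'] params
  by linarith

definition iter_inv :: "nat \<Rightarrow> bool" where
  "iter_inv k \<longleftrightarrow> f (th R k) \<le> f th0 \<and> Dmin \<le> Din R k \<and> Din R k \<le> Dmax"

lemma accuracy_current:
  assumes k: "k \<le> K" and inv: "iter_inv k"
  shows "\<bar>ftil xs (fst (finm R k)) - f (th R k)\<bar> \<le> eta1' * pdec xs R k"
proof -
  have "norm (rres xs xhat (th R k)) \<le> Rb"
    using residual_bound[of "th R k" "th R k"] inv params unfolding iter_inv_def by simp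
  then have "\<bar>ftil xs (fst (finm R k)) - f (th R k)\<bar> \<le> (2 * Rb + real CARD('n)) * e"
    using ftil_minus_fobj_le[where xhat = xhat and theta = "th R k"] finm_eval_err[OF k]
      e_nonneg e_le_one
    by blast
  also have "\<dots> \<le> eta1' * pdec xs R k"
    using eval_err_le_pdec[OF k] inv unfolding iter_inv_def by simp
  finally show ?thesis .
qed

lemma Dfin_le_Dmax: "iter_inv k \<Longrightarrow> Dfin gdec R k \<le> Dmax"
  using Dfin_le_Din[of k] Dmin_pos unfolding iter_inv_def by linarith

lemma norm_st_le_Dmax: "k \<le> K \<Longrightarrow> iter_inv k \<Longrightarrow> norm (st R k) \<le> Dmax"
  using norm_st_le Dfin_le_Dmax by (meson order_trans)

lemma accuracy_trial:
  assumes k: "k \<le> K" and inv: "iter_inv k"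
  shows "\<bar>ftil xs (xp R k) - f (th R k + st R k)\<bar> \<le> eta1' * pdec xs R k"
proof -
  have "norm (rres xs xhat (th R k + st R k)) \<le> Rb"
    using residual_bound[of "th R k" "th R k + st R k"] inv norm_st_le_Dmax[OF k inv]
    unfolding iter_inv_def by (simp add: dist_norm)
  moreover have "\<forall>i. norm (xp R k i - xhat i (th R k + st R k)) \<le> e"
    using evals k unfolding evals_within_def by auto
  ultimately have "\<bar>ftil xs (xp R k) - f (th R k + st R k)\<bar> \<le> (2 * Rb + real CARD('n)) * e"
    using ftil_minus_fobj_le[where xhat = xhat and theta = "th R k + st R k"] e_nonneg e_le_one
    by blast
  also have "\<dots> \<le> eta1' * pdec xs R k"
    using eval_err_le_pdec[OF k] inv unfolding iter_inv_def by simp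
  finally show ?thesis .
qed

lemma pdec_pos: "k \<le> K \<Longrightarrow> iter_inv k \<Longrightarrow> 0 < pdec xs R k"
  using pdec_ge_Dmin[of k] mult_pos_pos[OF gmin_pos Dmin_pos] unfolding iter_inv_def by simp

text \<open>Since both evaluations are accurate to \<open>\<eta>\<^sub>1' < \<eta>\<^sub>1/2\<close> times the predicted
  decrease, an accepted step (\<open>\<rho>\<^sup>k \<ge> \<eta>\<^sub>1\<close>) decreases the true objective.\<close>

lemma fobj_th_Suc_le:
  assumes k: "k \<le> K" and inv: "iter_inv k"
  shows "f (th R (Suc k)) \<le> f (th R k)"
proof (cases "accepted kef keg xs xhat gdec eta1 eta2 R k")
  case True
  define P where "P = pdec xs R k"
  have "0 < P" using pdec_pos[OF k inv] unfolding P_def .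
  have "eta1 \<le> rhot xs R k" using True params unfolding accepted_def by auto
  then have "eta1 * P \<le> ftil xs (fst (finm R k)) - ftil xs (xp R k)"
    using \<open>0 < P\<close> unfolding rhot_def P_def by (simp add: le_divide_eq)
  moreover have "2 * eta1' * P \<le> eta1 * P" using params \<open>0 < P\<close> by (intro mult_right_mono) auto
  ultimately have "f (th R k + st R k) \<le> f (th R k)"
    using accuracy_current[OF k inv] accuracy_trial[OF k inv] unfolding P_def
    by (simp add: abs_le_iff)
  then show ?thesis using True th_Suc[OF k] by simp
next
  case False
  then show ?thesis using th_Suc[OF k] by simp
qed

text \<open>With \<open>P = m(0) - m(s)\<close> and a fully linear model, \<open>(1 - \<rho>) P \<le> \<kappa>\<^sub>e\<^sub>f \<Delta>\<^sup>2 + \<eta>\<^sub>1' P\<close>;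
  for \<open>\<Delta> \<le> \<tau>\<close> Assumption B makes the right-hand side at most \<open>(1 - \<eta>\<^sub>2) P\<close>.\<close>

lemma shrink_floor_lt_Dfin:
  assumes k: "k \<le> K" and inv: "iter_inv k" and FL: "FLk kef keg xs xhat gdec R k"
    and rho: "rhot xs R k < eta2"
  shows "tau < Dfin gdec R k"
proof (rule ccontr)
  define D where "D = Dfin gdec R k"
  define P where "P = pdec xs R k"
  define M where "M = finm R k"
  assume "\<not> tau < Dfin gdec R k"
  then have "D \<le> tau" unfolding D_def by simp
  have D: "Dmin \<le> Din R k" using inv unfolding iter_inv_def by simp
  have "0 < D" using Dfin_ge_Dmin[OF k D] Dmin_pos unfolding D_def by simp
  have "min D (gmin / kH) = D" using \<open>D \<le> tau\<close> tau_le by simp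
  then have "1/2 * gmin * D \<le> P" using pdec_ge[OF k D] unfolding D_def P_def by simp
  have "0 < P" using pdec_pos[OF k inv] unfolding P_def .
  have model_err: "\<bar>f (th R k + st R k) - mval xs M (st R k)\<bar> \<le> kef * D\<^sup>2"
    using FL norm_st_le[OF k] unfolding FLk_def fully_linear_def D_def M_def by auto
  have "kef * D\<^sup>2 \<le> kef * (D * ((1 - eta2) * gmin / (4 * kef)))"
    using \<open>D \<le> tau\<close> tau_le(2) \<open>0 < D\<close> params unfolding power2_eq_square
    by (intro mult_left_mono) auto
  also have "\<dots> = (1 - eta2) / 2 * (1/2 * gmin * D)" using params by (simp add: field_simps)
  also have "\<dots> \<le> (1 - eta2) / 2 * P"
    using \<open>1/2 * gmin * D \<le> P\<close> params by (intro mult_left_mono) auto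
  finally have "kef * D\<^sup>2 \<le> (1 - eta2) / 2 * P" .
  moreover have "eta1' * P \<le> (1 - eta2) / 2 * P" using params \<open>0 < P\<close> by (intro mult_right_mono) auto
  moreover have "P = ftil xs (fst M) - mval xs M (st R k)"
    unfolding P_def M_def pdec_def using mval_zero[OF linear_finm[OF k]] by simp
  moreover have "eta2 * P = P - 2 * ((1 - eta2) / 2 * P)" by (simp add: field_simps)
  moreover have "f (th R k + st R k) - mval xs M (st R k) \<le> kef * D\<^sup>2"
    and "ftil xs (xp R k) - f (th R k + st R k) \<le> eta1' * P"
    using model_err accuracy_trial[OF k inv] unfolding P_def by (auto simp: abs_le_iff)
  ultimately have "eta2 * P \<le> ftil xs (fst M) - ftil xs (xp R k)" by linarith
  then have "eta2 \<le> rhot xs R k"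
    using \<open>0 < P\<close> unfolding rhot_def P_def M_def by (simp add: le_divide_eq)
  then show False using rho by simp
qed

lemma Din_Suc_bounds:
  assumes k: "k \<le> K" and inv: "iter_inv k"
  shows "Dmin \<le> Din R (Suc k) \<and> Din R (Suc k) \<le> Dmax"
proof -
  have D: "Dmin \<le> Din R k" and "Din R k \<le> Dmax" using inv unfolding iter_inv_def by auto
  have lower: "Dmin \<le> Dfin gdec R k" using Dfin_ge_Dmin[OF k D] .
  have upper: "Dfin gdec R k \<le> Dmax" using Dfin_le_Dmax[OF inv] .
  have "0 < Dfin gdec R k" using lower Dmin_pos by simp
  consider "eta2 \<le> rhot xs R k" | "rhot xs R k < eta2" "\<not> FLk kef keg xs xhat gdec R k"
    | "rhot xs R k < eta2" "FLk kef keg xs xhat gdec R k"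
    by fastforce
  then show ?thesis
  proof cases
    case 1
    moreover have "Dfin gdec R k \<le> ginc * Dfin gdec R k" using \<open>0 < Dfin gdec R k\<close> params by simp
    moreover have "Dmin \<le> Dmax" using Dmin_le(1) params by simp
    ultimately show ?thesis using Din_Suc[OF k] lower by simp
  next
    case 2
    then show ?thesis using Din_Suc[OF k] lower upper by simp
  next
    case 3
    then have "gdec * tau \<le> gdec * Dfin gdec R k"
      using shrink_floor_lt_Dfin[OF k inv] params by simp
    moreover have "gdec * Dfin gdec R k \<le> Dfin gdec R k" using \<open>0 < Dfin gdec R k\<close> params by simp
    ultimately show ?thesis using 3 Din_Suc[OF k] Dmin_le(2) upper by simp
  qed
qed

lemma iter_inv_holds: "k \<le> Suc K \<Longrightarrow> iter_inv k"
proof (induction k)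
  case 0
  then show ?case using th_0 Din_0 Dmin_le(1) params unfolding iter_inv_def by simp
next
  case (Suc k)
  then have "k \<le> K" and "iter_inv k" by auto
  then show ?case
    using fobj_th_Suc_le Din_Suc_bounds unfolding iter_inv_def by fastforce
qed

lemma evaluation_requirements:
  "\<forall>k \<le> K.
     \<bar>ftil xs (fst (finm R k)) - fobj xs xhat (th R k)\<bar> \<le> eta1' * pdec xs R k \<and>
     \<bar>ftil xs (xp R k) - fobj xs xhat (th R k + st R k)\<bar> \<le> eta1' * pdec xs R k \<and>
     (crit R k \<longrightarrow> (\<forall>j \<le> ncrit R k.
        (\<forall>i. norm (fst (cm R k j) i - xhat i (th R k)) \<le> c * (gdec ^ j * Din R k)\<^sup>2)
        \<and> cerr R k j \<le> c * (gdec ^ j * Din R k)\<^sup>2)) \<and>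
     (rebuilt kef keg xs xhat gdec eta1 eta2 R k \<longrightarrow>
        (\<forall>i. norm (fst (m0 R (Suc k)) i - xhat i (th R (Suc k))) \<le> c * (Din R (Suc k))\<^sup>2)
        \<and> ferr R k \<le> c * (Din R (Suc k))\<^sup>2)"
proof (intro allI impI conjI)
  fix k assume k: "k \<le> K"
  have inv: "iter_inv k" using iter_inv_holds k by simp
  show "\<bar>ftil xs (fst (finm R k)) - f (th R k)\<bar> \<le> eta1' * pdec xs R k"
    using accuracy_current[OF k inv] .
  show "\<bar>ftil xs (xp R k) - f (th R k + st R k)\<bar> \<le> eta1' * pdec xs R k"
    using accuracy_trial[OF k inv] .
  fix j assume cr: "crit R k" and j: "j \<le> ncrit R k"
  have e: "e \<le> c * (gdec ^ j * Din R k)\<^sup>2"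
    using e_le_model_tol_if crit_radius_ge_Dmin[OF k cr _ j] inv unfolding iter_inv_def by simp
  show "cerr R k j \<le> c * (gdec ^ j * Din R k)\<^sup>2"
    using crit_evals_within[OF k cr j] e by linarith
  fix i
  show "norm (fst (cm R k j) i - xhat i (th R k)) \<le> c * (gdec ^ j * Din R k)\<^sup>2"
    using crit_evals_within[OF k cr j] e by (meson order_trans)
next
  fix k assume k: "k \<le> K"
  have e: "e \<le> c * (Din R (Suc k))\<^sup>2"
    using e_le_model_tol_if iter_inv_holds[of "Suc k"] k unfolding iter_inv_def by simp
  have errs: "(\<forall>i. norm (fst (m0 R (Suc k)) i - xhat i (th R (Suc k))) \<le> e) \<and> ferr R k \<le> e"
    using evals k unfolding evals_within_def by auto
  show "ferr R k \<le> c * (Din R (Suc k))\<^sup>2" using errs e by linarith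
  fix i
  show "norm (fst (m0 R (Suc k)) i - xhat i (th R (Suc k))) \<le> c * (Din R (Suc k))\<^sup>2"
    using errs e by (meson order_trans)
qed

end

theorem proposition2:
  fixes xs :: "'n::finite \<Rightarrow> 'b::euclidean_space"
    and xhat :: "'n \<Rightarrow> 'a::euclidean_space \<Rightarrow> 'b"
    and th0 :: 'a
    and D0 Dmax gdec ginc eta1 eta2 eta1' kef keg c kH :: real
  assumes "0 < Dmax" and "0 < gdec" and "gdec < 1" and "1 < ginc"
    and "0 < eta1" and "eta1 \<le> eta2" and "eta2 < 1"
    and "0 < eta1'" and "eta1' < min eta1 (1 - eta2) / 2"
    and "0 < D0" and "D0 \<le> Dmax"
    and "0 < kef" and "0 < keg" and "0 < c" and "1 \<le> kH"
    and "assumptionA xs xhat th0 Dmax"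
  shows "\<exists>C > 0. \<forall>eps K (R :: ('a, 'b, 'n) dfo_run).
    0 < eps \<and> eps \<le> 1 \<and>
    dfo_run xs xhat kef keg c Dmax gdec ginc eta1 eta2 eps th0 D0 K R \<and>
    assumptionB xs gdec kH K R \<and>
    (\<forall>k \<le> K. \<exists>G. (GDERIV (fobj xs xhat) (th R k) :> G) \<and> eps \<le> norm G) \<and>
    evals_within xs xhat (C * eps^2) K R
    \<longrightarrow>
    (\<forall>k \<le> K.
       \<bar>ftil xs (fst (finm R k)) - fobj xs xhat (th R k)\<bar> \<le> eta1' * pdec xs R k \<and>
       \<bar>ftil xs (xp R k) - fobj xs xhat (th R k + st R k)\<bar> \<le> eta1' * pdec xs R k \<and>
       (crit R k \<longrightarrow> (\<forall>j \<le> ncrit R k.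
          (\<forall>i. norm (fst (cm R k j) i - xhat i (th R k)) \<le> c * (gdec ^ j * Din R k)^2)
          \<and> cerr R k j \<le> c * (gdec ^ j * Din R k)^2)) \<and>
       (rebuilt kef keg xs xhat gdec eta1 eta2 R k \<longrightarrow>
          (\<forall>i. norm (fst (m0 R (Suc k)) i - xhat i (th R (Suc k))) \<le> c * (Din R (Suc k))^2)
          \<and> ferr R k \<le> c * (Din R (Suc k))^2))"
proof -
  obtain Rb where "0 \<le> Rb" and residual_bound:
    "\<And>theta z. fobj xs xhat theta \<le> fobj xs xhat th0 \<Longrightarrow> dist z theta \<le> Dmax
       \<Longrightarrow> norm (rres xs xhat z) \<le> Rb"
    using norm_rres_le_near_sublevel[OF \<open>assumptionA xs xhat th0 Dmax\<close>] \<open>0 < Dmax\<close> by auto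
  have "0 < 2 * Rb + real CARD('n)" using \<open>0 \<le> Rb\<close> by (simp add: add_nonneg_pos)
  then obtain C where "0 < C" and tolerance: "\<And>eps. 0 < eps \<Longrightarrow> eps \<le> 1 \<Longrightarrow>
      C * eps\<^sup>2 \<le> 1 \<and>
      C * eps\<^sup>2 \<le> c * (radius_floor D0 gdec kef keg kH eta2 eps)\<^sup>2 \<and>
      (2 * Rb + real CARD('n)) * (C * eps\<^sup>2)
        \<le> eta1' * (1/2 * grad_floor keg eps * radius_floor D0 gdec kef keg kH eta2 eps)"
    using error_tolerance_quadratic[of D0 gdec kef keg kH eta2 c eta1'] assms by auto
  show ?thesis
    apply (rule exI[of _ C], rule conjI[OF \<open>0 < C\<close>], (rule allI)+, rule impI, elim conjE)
    subgoal for eps K R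
      by (rule dfo_eps_run.evaluation_requirements[where Rb = Rb and e = "C * eps\<^sup>2"],
          unfold_locales)
        (use assms residual_bound tolerance[of eps] \<open>C > 0\<close> in auto)
    done
qed

end
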